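(* In the setting below, if for every $m$ the point $X^x_m$ is the nearest neighbor of $x$ according to an ISIMIN $(\psi_m,\Theta_m)_{m\in\mathbb{N}}$, then $x$ is a Lebesgue point for $\eta$ with respect to $\mathbb{P}_X$ if and only if $\mathbb{E}[|\eta(X^x_m)-\eta(x)|]\to0$ as $m\to\infty$.
   Context: Let $(\mathcal{X},d)$ be a metric space with its Borel $\sigma$-algebra, let $(\Omega,\mathcal{F},\mathbb{P})$ be a probability space, and let $X,X_1,X_2,\dots$ be i.i.d. $\mathcal{X}$-valued random variables with common law $\mathbb{P}_X$. For $x\in\mathcal{X}$ and $r>0$ write $\bar B_r=\{x':d(x,x')\le r\}$. The support of $\mathbb{P}_X$ is the set of $x$ such that $\mathbb{P}_X(\bar B_r(x))>0$ for all $r>0$. Fix $x$ in the support of $\mathbb{P}_X$ and a bounded measurable $\eta:\mathcal{X}\to\mathbb{R}$. An ISIMIN is a sequence $(\psi_m,\Theta_m)_{m\in\mathbb{N}}$ such that for each $m$ there is a measurable space $(\mathcal{Z}_m,\mathcal{G}_m)$, $\Theta_m:\Omega\to\mathcal{Z}_m$ is a random variable independent of $(X_1,\dots,X_m)$, and $\psi_m:[0,\infty)^m\times\mathcal{Z}_m\to\{1,\dots,m\}$ is measurable with $\psi_m(r_1,\dots,r_m,z)\in\arg\min_{k}r_k$ for all arguments. The nearest neighbor of $x$ according to $(\psi_m,\Theta_m)$ is $X^x_m:=X_{\psi_m(d(x,X_1),\dots,d(x,X_m),\Theta_m)}$. The point $x$ is a Lebesgue point if $\mathbb{E}[\mathbb{I}_{\bar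 B_r}(X)\,|\eta(X)-\eta(x)|]/\mathbb{P}_X(\bar B_r)\to 0$ as $r\to 0^+$. *)

theory Defs
  imports "HOL-Probability.Probability"
begin

definition in_support :: "'a::metric_space measure \<Rightarrow> 'a \<Rightarrow> bool" where
  "in_support P x \<longleftrightarrow> (\<forall>r>0. measure P (cball x r) > 0)"

definition lebesgue_point :: "'a::metric_space measure \<Rightarrow> ('a \<Rightarrow> real) \<Rightarrow> 'a \<Rightarrow> bool" where
  "lebesgue_point P \<eta> x \<longleftrightarrow>
     ((\<lambda>r. (\<integral>y. indicator (cball x r) y * \<bar>\<eta> y - \<eta> x\<bar> \<partial>P) / measure P (cball x r))
        \<longlongrightarrow> 0) (at_right 0)"

text \<open>ISIMIN for the sample \<open>X 1, X 2, \<dots>\<close>: for each \<open>m \<ge> 1\<close>, \<open>Z m\<close> is a measurable space,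
  \<open>\<Theta> m\<close> a random variable into \<open>Z m\<close> independent of \<open>(X 1,\<dots>,X m)\<close>, and
  \<open>\<psi> m : [0,\<infinity>)^m \<times> Z m \<rightarrow> {1..m}\<close> measurable, selecting an index of a minimal coordinate.
  Points of \<open>[0,\<infinity>)^m\<close> are (extensional) functions on \<open>{1..m}\<close>.\<close>
definition isimin ::
  "'w measure \<Rightarrow> (nat \<Rightarrow> 'w \<Rightarrow> 'a::metric_space) \<Rightarrow> (nat \<Rightarrow> 'z measure) \<Rightarrow> (nat \<Rightarrow> 'w \<Rightarrow> 'z)
   \<Rightarrow> (nat \<Rightarrow> (nat \<Rightarrow> real) \<Rightarrow> 'z \<Rightarrow> nat) \<Rightarrow> bool" where
  "isimin M X Z \<Theta> \<psi> \<longleftrightarrow>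
    (\<forall>m\<ge>1.
       \<Theta> m \<in> M \<rightarrow>\<^sub>M Z m \<and>
       prob_space.indep_set M
         (sigma_sets (space M) {\<Theta> m -` A \<inter> space M | A. A \<in> sets (Z m)})
         (sigma_sets (space M) {(\<lambda>\<omega>. \<lambda>i\<in>{1..m}. X i \<omega>) -` A \<inter> space M | A.
                                  A \<in> sets (PiM {1..m} (\<lambda>_. (borel :: 'a measure)))}) \<and>
       (\<lambda>(r, z). \<psi> m r z) \<in>
          (PiM {1..m} (\<lambda>_. restrict_space borel {0::real..}) \<Otimes>\<^sub>M Z m) \<rightarrow>\<^sub>M count_space {1..m} \<and>
       (\<forall>r \<in> space (PiM {1..m} (\<lambda>_. restrict_space borel {0::real..})). \<forall>z \<in> space (Z m).
          \<psi> m r z \<in> {1..m} \<and> (\<forall>k\<in>{1..m}. r (\<psi> m r z) \<le> r k)))"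

definition nn_point ::
  "(nat \<Rightarrow> 'w \<Rightarrow> 'a::metric_space) \<Rightarrow> (nat \<Rightarrow> 'w \<Rightarrow> 'z) \<Rightarrow> (nat \<Rightarrow> (nat \<Rightarrow> real) \<Rightarrow> 'z \<Rightarrow> nat)
   \<Rightarrow> 'a \<Rightarrow> nat \<Rightarrow> 'w \<Rightarrow> 'a" where
  "nn_point X \<Theta> \<psi> x m \<omega> = X (\<psi> m (\<lambda>i\<in>{1..m}. dist x (X i \<omega>)) (\<Theta> m \<omega>)) \<omega>"

end

theory Submission
  imports Defs
begin

text \<open>
  By independence of the tie-breaking variable, the law of the nearest neighbour \<open>X\<^sup>x\<^sub>m\<close> has a
  density \<open>w\<^sub>m(d(x,\<cdot>))\<close> with respect to \<open>P\<^sub>X\<close>, where \<open>w\<^sub>m(t)\<close> sums over \<open>k\<close> the probability that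
  index \<open>k\<close> is selected when \<open>X\<^sub>k\<close> lies at distance \<open>t\<close>. This weight is nonincreasing in \<open>t\<close>,
  integrates to \<open>1\<close>, is at most \<open>m\<close>, is at least \<open>m P(d(x,X) > t)\<^bsup>m-1\<^esup>\<close>, and has mass at most
  \<open>P(d(x,X) > r)\<^sup>m\<close> outside the ball of radius \<open>r\<close>; so the risk \<open>E|\<eta>(X\<^sup>x\<^sub>m) - \<eta>(x)|\<close> is the
  \<open>w\<^sub>m\<close>-weighted average of \<open>|\<eta> - \<eta>(x)|\<close>.

  If \<open>x\<close> is a Lebesgue point, a layer-cake decomposition of the nonincreasing weight bounds the
  contribution of a small ball by the largest ball average of \<open>|\<eta> - \<eta>(x)|\<close>, and the tail
  vanishes geometrically. Conversely, for \<open>m = \<lceil>1 / P(B\<^sub>r)\<rceil>\<close> the weight is at least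
  \<open>e\<^sup>-\<^sup>2 / P(B\<^sub>r)\<close> on \<open>B\<^sub>r\<close>, so the ball average at radius \<open>r\<close> is at most \<open>e\<^sup>2\<close> times the risk;
  when \<open>x\<close> is an atom of \<open>P\<^sub>X\<close> the ball averages tend to \<open>0\<close> anyway.
\<close>

lemma (in prob_space) indep_set_commute: "indep_set A B \<Longrightarrow> indep_set B A"
  unfolding indep_sets2_eq by (metis Int_commute mult.commute)

lemma (in prob_space) distr_pair_eq_pair_measure_if_indep_set:
  assumes X: "random_variable S X" and Y: "random_variable T Y"
    and indep: "indep_set (sigma_sets (space M) {X -` A \<inter> space M | A. A \<in> sets S})
                   (sigma_sets (space M) {Y -` A \<inter> space M | A. A \<in> sets T})"
  shows "distr M (S \<Otimes>\<^sub>M T) (\<lambda>\<omega>. (X \<omega>, Y \<omega>)) = distr M S X \<Otimes>\<^sub>M distr M T Y"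
proof -
  have XY: "random_variable (S \<Otimes>\<^sub>M T) (\<lambda>\<omega>. (X \<omega>, Y \<omega>))" by (rule measurable_Pair[OF X Y])
  interpret PX: prob_space "distr M S X" by (rule prob_space_distr) fact
  interpret PY: prob_space "distr M T Y" by (rule prob_space_distr) fact
  interpret PXY: pair_prob_space "distr M S X" "distr M T Y" ..
  show ?thesis
  proof (rule pair_measure_eqI[symmetric])
    fix A B assume A: "A \<in> sets (distr M S X)" and B: "B \<in> sets (distr M T Y)"
    have "(\<lambda>\<omega>. (X \<omega>, Y \<omega>)) -` (A \<times> B) \<inter> space M = (X -` A \<inter> space M) \<inter> (Y -` B \<inter> space M)"
      by auto
    moreover have "X -` A \<inter> space M \<in> sigma_sets (space M) {X -` A \<inter> space M | A. A \<in> sets S}"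
      "Y -` B \<inter> space M \<in> sigma_sets (space M) {Y -` A \<inter> space M | A. A \<in> sets T}"
      using A B by (auto intro: sigma_sets.Basic)
    then have "prob ((X -` A \<inter> space M) \<inter> (Y -` B \<inter> space M))
        = prob (X -` A \<inter> space M) * prob (Y -` B \<inter> space M)"
      using indep[unfolded indep_sets2_eq] by blast
    ultimately show "emeasure (distr M S X) A * emeasure (distr M T Y) B
        = emeasure (distr M (S \<Otimes>\<^sub>M T) (\<lambda>\<omega>. (X \<omega>, Y \<omega>))) (A \<times> B)"
      using X Y XY A B
      by (simp add: emeasure_distr emeasure_eq_measure measure_nonneg ennreal_mult)
  qed (simp_all add: PX.sigma_finite_measure PY.sigma_finite_measure)
qed

lemma (in prob_space) nn_integral_eq_integral_bounded:
  assumes "f \<in> borel_measurable M" "\<And>w. w \<in> space M \<Longrightarrow> 0 \<le> f w \<and> f w \<le> B"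
  shows "(\<integral>\<^sup>+w. ennreal (f w) \<partial>M) = ennreal (\<integral>w. f w \<partial>M)"
  using assms by (intro nn_integral_eq_integral integrable_const_bound[where B=B]) auto

locale nn_selection =
  fixes P :: "'a::metric_space measure" and N :: "'z measure" and x :: 'a and m :: nat
    and \<psi> :: "(nat \<Rightarrow> real) \<Rightarrow> 'z \<Rightarrow> nat"
  assumes prob_space_P: "prob_space P" and sets_P: "sets P = sets borel"
    and prob_space_N: "prob_space N"
    and \<psi>_measurable: "(\<lambda>(r, z). \<psi> r z)
      \<in> (PiM {1..m} (\<lambda>_. restrict_space borel {0::real..}) \<Otimes>\<^sub>M N) \<rightarrow>\<^sub>M count_space {1..m}"
    and \<psi>_argmin: "\<And>r z. r \<in> space (PiM {1..m} (\<lambda>_. restrict_space borel {0::real..})) \<Longrightarrow>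
      z \<in> space N \<Longrightarrow> \<psi> r z \<in> {1..m} \<and> (\<forall>k\<in>{1..m}. r (\<psi> r z) \<le> r k)"
begin

abbreviation "dist_space \<equiv> PiM {1..m} (\<lambda>_. restrict_space borel {0::real..})"
abbreviation "sample_space J \<equiv> PiM J (\<lambda>_. P)"

definition dists :: "(nat \<Rightarrow> 'a) \<Rightarrow> nat \<Rightarrow> real" where
  "dists v = (\<lambda>i\<in>{1..m}. dist x (v i))"

abbreviation selected :: "(nat \<Rightarrow> 'a) \<Rightarrow> 'z \<Rightarrow> 'a" where
  "selected v z \<equiv> v (\<psi> (dists v) z)"

lemma space_P [simp]: "space P = UNIV"
  using sets_P by (metis sets_eq_imp_space_eq space_borel)

lemma measurable_dist_P [measurable]: "(\<lambda>a. dist x a) \<in> borel_measurable P"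
  by (subst measurable_cong_sets[OF sets_P refl])
     (intro borel_measurable_continuous_onI continuous_intros)

lemma sets_dist_gt [measurable]: "{a. t < dist x a} \<in> sets P"
proof -
  have "{a \<in> space P. t < dist x a} \<in> sets P" by measurable
  then show ?thesis by simp
qed

lemma dists_in_space: "dists v \<in> space dist_space"
  by (auto simp: dists_def space_PiM PiE_iff space_restrict_space)

lemma dists_upd_in_space: "k \<in> {1..m} \<Longrightarrow> 0 \<le> t \<Longrightarrow> (dists v)(k := t) \<in> space dist_space"
  by (auto simp: dists_def space_PiM PiE_iff space_restrict_space extensional_def)

lemma dists_upd: "k \<in> {1..m} \<Longrightarrow> dists (v(k := a)) = (dists v)(k := dist x a)"
  by (auto simp: dists_def fun_eq_iff)

lemma measurable_dists [measurable]: "dists \<in> sample_space {1..m} \<rightarrow>\<^sub>M dist_space"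
  unfolding dists_def by (intro measurable_restrict measurable_restrict_space2) auto

lemma measurable_dists_upd:
  assumes k: "k \<in> {1..m}" and g: "g \<in> borel_measurable L" and g_nonneg: "\<And>w. w \<in> space L \<Longrightarrow> 0 \<le> g w"
    and h: "h \<in> L \<rightarrow>\<^sub>M sample_space ({1..m} - {k})"
  shows "(\<lambda>w. (dists (h w))(k := g w)) \<in> L \<rightarrow>\<^sub>M dist_space"
proof -
  define u where "u w i = (if i \<in> {1..m} then if i = k then g w else dist x (h w i) else undefined)" for w i
  have "(\<lambda>w. (dists (h w))(k := g w)) = u"
    using k by (auto simp: dists_def u_def fun_eq_iff)
  also have "u \<in> L \<rightarrow>\<^sub>M dist_space"
  proof (rule measurable_PiM_single')
    fix i assume i: "i \<in> {1..m}"
    have "(\<lambda>w. u w i) \<in> borel_measurable L"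
      using i g h by (cases "i = k") (simp_all add: u_def)
    then show "(\<lambda>w. u w i) \<in> L \<rightarrow>\<^sub>M restrict_space borel {0..}"
      by (rule measurable_restrict_space2[rotated]) (use g_nonneg i in \<open>auto simp: u_def\<close>)
  qed (auto simp: space_restrict_space g_nonneg u_def)
  finally show ?thesis .
qed

lemma product_sigma_finite_P: "product_sigma_finite (\<lambda>_::nat. P)"
  unfolding product_sigma_finite_def using prob_space_P prob_space_imp_sigma_finite by blast

lemma prob_space_PP: "prob_space (sample_space J)"
  by (intro prob_space_PiM prob_space_P)

lemma measurable_\<psi> [measurable]:
  "g \<in> L \<rightarrow>\<^sub>M dist_space \<Longrightarrow> h \<in> L \<rightarrow>\<^sub>M N \<Longrightarrow> (\<lambda>w. \<psi> (g w) (h w)) \<in> L \<rightarrow>\<^sub>M count_space {1..m}"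
  using measurable_compose[OF measurable_Pair \<psi>_measurable] by (simp add: case_prod_beta)

lemma selected_index:
  assumes z: "z \<in> space N"
  shows "\<psi> (dists v) z \<in> {1..m}" "\<And>j. j \<in> {1..m} \<Longrightarrow> dist x (selected v z) \<le> dist x (v j)"
proof -
  note argmin = \<psi>_argmin[OF dists_in_space z, of v]
  then show index: "\<psi> (dists v) z \<in> {1..m}" by blast
  show "dist x (selected v z) \<le> dist x (v j)" if "j \<in> {1..m}" for j
    using argmin index that unfolding dists_def by (metis restrict_apply')
qed

lemma measurable_selected_index [measurable]:
  "(\<lambda>w. \<psi> (dists (fst w)) (snd w)) \<in> (sample_space {1..m} \<Otimes>\<^sub>M N) \<rightarrow>\<^sub>M count_space {1..m}"
  by measurable

lemma selected_eq_sum: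
  fixes \<phi> :: "'a \<Rightarrow> 'b::comm_semiring_1"
  assumes "z \<in> space N"
  shows "\<phi> (selected v z) = (\<Sum>k\<in>{1..m}. \<phi> (v k) * (if \<psi> (dists v) z = k then 1 else 0))"
  using selected_index(1)[OF assms] by (simp add: if_distrib[where f="\<lambda>y. _ * y"] sum.delta' cong: if_cong)

lemma measurable_selected [measurable]:
  "(\<lambda>w. selected (fst w) (snd w)) \<in> (sample_space {1..m} \<Otimes>\<^sub>M N) \<rightarrow>\<^sub>M P"
  by (rule measurable_compose_countable'[where f="\<lambda>i w. fst w i", OF _ measurable_selected_index]) auto

definition select_prob :: "nat \<Rightarrow> real \<Rightarrow> ennreal" where
  "select_prob k t =
    (\<integral>\<^sup>+v. \<integral>\<^sup>+z. (if \<psi> ((dists v)(k := t)) z = k then 1 else 0) \<partial>N \<partial>sample_space ({1..m} - {k}))"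

lemma measurable_select_prob [measurable]:
  assumes k: "k \<in> {1..m}"
  shows "(\<lambda>a. select_prob k (dist x a)) \<in> borel_measurable P"
proof -
  interpret N: prob_space N by (rule prob_space_N)
  let ?Q = "sample_space ({1..m} - {k}) \<Otimes>\<^sub>M N"
  interpret Q: sigma_finite_measure ?Q
    by (intro prob_space_imp_sigma_finite prob_space_pair prob_space_PP prob_space_N)
  let ?sel = "\<lambda>a w. (if \<psi> ((dists (fst w))(k := dist x a)) (snd w) = k then 1 else 0) :: ennreal"
  have "(\<lambda>aw. ?sel (fst aw) (snd aw)) \<in> borel_measurable (P \<Otimes>\<^sub>M ?Q)"
  proof -
    have "(\<lambda>w. \<psi> ((dists (fst (snd w)))(k := dist x (fst w))) (snd (snd w)))
       \<in> (P \<Otimes>\<^sub>M ?Q) \<rightarrow>\<^sub>M count_space {1..m}"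
      by (intro measurable_\<psi> measurable_dists_upd[OF k]) auto
    then show ?thesis by measurable
  qed
  from Q.borel_measurable_nn_integral_fst[OF this]
  have "(\<lambda>a. \<integral>\<^sup>+w. ?sel a w \<partial>?Q) \<in> borel_measurable P" by simp
  moreover have "select_prob k (dist x a) = (\<integral>\<^sup>+w. ?sel a w \<partial>?Q)" for a
  proof -
    have "(\<lambda>w. \<psi> ((dists (fst w))(k := dist x a)) (snd w)) \<in> ?Q \<rightarrow>\<^sub>M count_space {1..m}"
      by (intro measurable_\<psi> measurable_dists_upd[OF k]) auto
    then have "?sel a \<in> borel_measurable ?Q" by measurable
    then show ?thesis unfolding select_prob_def
      by (subst N.nn_integral_fst[symmetric]) (simp_all add: case_prod_beta)
  qed
  ultimately show ?thesis by simp
qed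

lemma nn_integral_selected_index_eq:
  assumes k: "k \<in> {1..m}" and \<phi> [measurable]: "\<phi> \<in> borel_measurable P"
  shows "(\<integral>\<^sup>+w. \<phi> (fst w k) * (if \<psi> (dists (fst w)) (snd w) = k then 1 else 0) \<partial>(sample_space {1..m} \<Otimes>\<^sub>M N))
       = (\<integral>\<^sup>+a. \<phi> a * select_prob k (dist x a) \<partial>P)"
proof -
  interpret N: prob_space N by (rule prob_space_N)
  interpret P: product_sigma_finite "\<lambda>_::nat. P" by (rule product_sigma_finite_P)
  define I where "I = {1..m} - {k}"
  have I: "{1..m} = insert k I" "finite I" "k \<notin> I" using k by (auto simp: I_def)
  let ?sel = "\<lambda>v z. (if \<psi> (dists v) z = k then 1 else 0) :: ennreal"
  have "(\<lambda>w. \<phi> (fst w k) * ?sel (fst w) (snd w)) \<in> borel_measurable (sample_space {1..m} \<Otimes>\<^sub>M N)"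
    using k by measurable
  from N.nn_integral_fst[OF this] N.borel_measurable_nn_integral_fst[OF this]
  have "(\<integral>\<^sup>+w. \<phi> (fst w k) * ?sel (fst w) (snd w) \<partial>(sample_space {1..m} \<Otimes>\<^sub>M N))
      = (\<integral>\<^sup>+a. \<integral>\<^sup>+v. \<integral>\<^sup>+z. \<phi> a * ?sel (v(k := a)) z \<partial>N \<partial>sample_space I \<partial>P)"
    unfolding I(1) by (simp add: P.product_nn_integral_insert_rev[OF I(2,3)])
  also have "\<dots> = (\<integral>\<^sup>+a. \<phi> a * select_prob k (dist x a) \<partial>P)"
  proof (rule nn_integral_cong)
    fix a
    let ?sel' = "\<lambda>v z. (if \<psi> ((dists v)(k := dist x a)) z = k then 1 else 0) :: ennreal"
    have "(\<lambda>w. \<psi> ((dists (fst w))(k := dist x a)) (snd w)) \<in> (sample_space I \<Otimes>\<^sub>M N) \<rightarrow>\<^sub>M count_space {1..m}"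
      unfolding I_def by (intro measurable_\<psi> measurable_dists_upd[OF k]) auto
    then have sel': "(\<lambda>w. ?sel' (fst w) (snd w)) \<in> borel_measurable (sample_space I \<Otimes>\<^sub>M N)"
      by measurable
    have "(\<integral>\<^sup>+v. \<integral>\<^sup>+z. \<phi> a * ?sel (v(k := a)) z \<partial>N \<partial>sample_space I) = (\<integral>\<^sup>+v. \<phi> a * \<integral>\<^sup>+z. ?sel' v z \<partial>N \<partial>sample_space I)"
      using measurable_Pair2[OF sel'] by (intro nn_integral_cong) (simp add: dists_upd[OF k] nn_integral_cmult)
    also have "\<dots> = \<phi> a * select_prob k (dist x a)"
      using N.borel_measurable_nn_integral_fst[OF sel']
      by (subst nn_integral_cmult) (simp_all add: select_prob_def I_def)
    finally show "(\<integral>\<^sup>+v. \<integral>\<^sup>+z. \<phi> a * ?sel (v(k := a)) z \<partial>N \<partial>sample_space I) = \<phi> a * select_prob k (dist x a)" .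
  qed
  finally show ?thesis .
qed

definition weight :: "real \<Rightarrow> real" where
  "weight t = (\<Sum>k\<in>{1..m}. enn2real (select_prob k t))"

lemma select_prob_le_1: "select_prob k t \<le> 1"
proof -
  interpret N: prob_space N by (rule prob_space_N)
  interpret Q: prob_space "sample_space ({1..m} - {k})" by (rule prob_space_PP)
  have "select_prob k t \<le> (\<integral>\<^sup>+v. \<integral>\<^sup>+z. 1 \<partial>N \<partial>sample_space ({1..m} - {k}))"
    unfolding select_prob_def by (intro nn_integral_mono) auto
  also have "\<dots> = 1" by (simp add: N.emeasure_space_1 prob_space.emeasure_space_1[OF prob_space_PP])
  finally show ?thesis .
qed

lemma ennreal_weight: "ennreal (weight t) = (\<Sum>k\<in>{1..m}. select_prob k t)"
proof -
  have "select_prob k t = ennreal (enn2real (select_prob k t))" for k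
    using select_prob_le_1[of k t]
    by (simp add: ennreal_enn2real_if) (metis ennreal_one_neq_top top.extremum_unique)
  then show ?thesis unfolding weight_def by (subst sum_ennreal[symmetric]) auto
qed

lemma nn_integral_selected:
  assumes [measurable]: "\<phi> \<in> borel_measurable P"
  shows "(\<integral>\<^sup>+w. \<phi> (selected (fst w) (snd w)) \<partial>(sample_space {1..m} \<Otimes>\<^sub>M N))
       = (\<integral>\<^sup>+a. \<phi> a * weight (dist x a) \<partial>P)"
proof -
  have "(\<integral>\<^sup>+w. \<phi> (selected (fst w) (snd w)) \<partial>(sample_space {1..m} \<Otimes>\<^sub>M N))
     = (\<integral>\<^sup>+w. (\<Sum>k\<in>{1..m}. \<phi> (fst w k) * (if \<psi> (dists (fst w)) (snd w) = k then 1 else 0)) \<partial>(sample_space {1..m} \<Otimes>\<^sub>M N))"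
    by (intro nn_integral_cong selected_eq_sum) (auto simp: space_pair_measure)
  also have "\<dots> = (\<Sum>k\<in>{1..m}. \<integral>\<^sup>+w. \<phi> (fst w k) * (if \<psi> (dists (fst w)) (snd w) = k then 1 else 0) \<partial>(sample_space {1..m} \<Otimes>\<^sub>M N))"
    by (intro nn_integral_sum) measurable
  also have "\<dots> = (\<Sum>k\<in>{1..m}. \<integral>\<^sup>+a. \<phi> a * select_prob k (dist x a) \<partial>P)"
    by (intro sum.cong refl nn_integral_selected_index_eq) auto
  also have "\<dots> = (\<integral>\<^sup>+a. \<phi> a * weight (dist x a) \<partial>P)"
    by (subst nn_integral_sum[symmetric]) (auto simp: ennreal_weight sum_distrib_left)
  finally show ?thesis .
qed

lemma \<psi>_argmin_upd:
  assumes "k \<in> {1..m}" "0 \<le> t" "z \<in> space N"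
  shows "\<psi> ((dists v)(k := t)) z \<in> {1..m}"
    and "\<And>j. j \<in> {1..m} \<Longrightarrow> ((dists v)(k := t)) (\<psi> ((dists v)(k := t)) z) \<le> ((dists v)(k := t)) j"
  using \<psi>_argmin[OF dists_upd_in_space[of k t v] assms(3)] assms(1,2) by blast+

lemma \<psi>_selects_closer:
  assumes k: "k \<in> {1..m}" and t: "0 \<le> t'" "t' \<le> t" and z: "z \<in> space N"
    and selects: "\<psi> ((dists v)(k := t)) z = k"
  shows "\<psi> ((dists v)(k := t')) z = k"
proof (rule ccontr)
  let ?j = "\<psi> ((dists v)(k := t')) z"
  assume j: "?j \<noteq> k"
  then have "t' \<noteq> t" using selects by auto
  have "?j \<in> {1..m}" "dists v ?j \<le> t'"
    using \<psi>_argmin_upd(1)[OF k t(1) z, where v=v] \<psi>_argmin_upd(2)[OF k t(1) z k, where v=v] j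
    by simp_all
  moreover have "t \<le> dists v ?j" if "?j \<in> {1..m}"
    using \<psi>_argmin_upd(2)[OF k order.trans[OF t] z that, where v=v] selects j by simp
  ultimately show False using \<open>t' \<noteq> t\<close> t by linarith
qed

lemma \<psi>_selects_strictly_closest:
  assumes k: "k \<in> {1..m}" and t: "0 \<le> t" and z: "z \<in> space N"
    and closest: "\<forall>j\<in>{1..m} - {k}. t < dist x (v j)"
  shows "\<psi> ((dists v)(k := t)) z = k"
proof (rule ccontr)
  let ?j = "\<psi> ((dists v)(k := t)) z"
  assume j: "?j \<noteq> k"
  have "?j \<in> {1..m}" "dists v ?j \<le> t"
    using \<psi>_argmin_upd(1)[OF k t z, where v=v] \<psi>_argmin_upd(2)[OF k t z k, where v=v] j
    by simp_all
  moreover from this(1) j closest have "t < dist x (v ?j)" by blast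
  ultimately show False by (simp add: dists_def)
qed

lemma select_prob_antimono: "k \<in> {1..m} \<Longrightarrow> 0 \<le> t' \<Longrightarrow> t' \<le> t \<Longrightarrow> select_prob k t \<le> select_prob k t'"
  unfolding select_prob_def by (intro nn_integral_mono) (auto intro: \<psi>_selects_closer)

lemma select_prob_lower:
  assumes k: "k \<in> {1..m}" and t: "0 \<le> t"
  shows "emeasure P {a. t < dist x a} ^ (m - 1) \<le> select_prob k t"
proof -
  interpret N: prob_space N by (rule prob_space_N)
  interpret P: product_sigma_finite "\<lambda>_::nat. P" by (rule product_sigma_finite_P)
  let ?S = "{a. t < dist x a}"
  have "emeasure P ?S ^ (m - 1) = (\<Prod>j\<in>{1..m} - {k}. \<integral>\<^sup>+a. indicator ?S a \<partial>P)"
    using k by (simp add: nn_integral_indicator)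
  also have "\<dots> = (\<integral>\<^sup>+v. (\<Prod>j\<in>{1..m} - {k}. indicator ?S (v j)) \<partial>sample_space ({1..m} - {k}))"
    by (rule P.product_nn_integral_prod[symmetric]) auto
  also have "\<dots> \<le> select_prob k t"
    unfolding select_prob_def
  proof (intro nn_integral_mono)
    fix v
    show "(\<Prod>j\<in>{1..m} - {k}. indicator ?S (v j))
        \<le> (\<integral>\<^sup>+z. (if \<psi> ((dists v)(k := t)) z = k then 1 else 0) \<partial>N)"
    proof (cases "\<forall>j\<in>{1..m} - {k}. t < dist x (v j)")
      case True
      then have "(\<integral>\<^sup>+z. (if \<psi> ((dists v)(k := t)) z = k then 1 else 0) \<partial>N) = 1"
        by (simp add: \<psi>_selects_strictly_closest[OF k t] N.emeasure_space_1 cong: nn_integral_cong)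
      then show ?thesis using True by (simp add: indicator_def)
    next
      case False
      then have "(\<Prod>j\<in>{1..m} - {k}. indicator ?S (v j)) = (0::ennreal)"
        by (auto simp: indicator_def)
      then show ?thesis by (metis zero_le)
    qed
  qed
  finally show ?thesis .
qed

lemma nn_integral_tail_selected_le:
  "(\<integral>\<^sup>+w. indicator {a. t < dist x a} (selected (fst w) (snd w)) \<partial>(sample_space {1..m} \<Otimes>\<^sub>M N))
     \<le> emeasure P {a. t < dist x a} ^ m"
proof -
  interpret N: prob_space N by (rule prob_space_N)
  interpret P: product_sigma_finite "\<lambda>_::nat. P" by (rule product_sigma_finite_P)
  let ?S = "{a. t < dist x a}"
  have "(\<integral>\<^sup>+w. indicator ?S (selected (fst w) (snd w)) \<partial>(sample_space {1..m} \<Otimes>\<^sub>M N))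
     \<le> (\<integral>\<^sup>+w. (\<Prod>j\<in>{1..m}. indicator ?S (fst w j)) \<partial>(sample_space {1..m} \<Otimes>\<^sub>M N))"
  proof (intro nn_integral_mono)
    fix w assume "w \<in> space (sample_space {1..m} \<Otimes>\<^sub>M N)"
    then have "snd w \<in> space N" by (simp add: space_pair_measure mem_Times_iff)
    from selected_index(2)[OF this]
    have "t < dist x (selected (fst w) (snd w)) \<Longrightarrow> \<forall>j\<in>{1..m}. t < dist x (fst w j)"
      by (meson less_le_trans)
    then show "indicator ?S (selected (fst w) (snd w)) \<le> (\<Prod>j\<in>{1..m}. indicator ?S (fst w j) :: ennreal)"
      by (cases "t < dist x (selected (fst w) (snd w))") (simp_all add: indicator_def)
  qed
  also have "\<dots> = (\<integral>\<^sup>+v. (\<Prod>j\<in>{1..m}. indicator ?S (v j)) \<partial>sample_space {1..m})"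
    by (subst N.nn_integral_fst[symmetric]) (measurable, simp add: N.emeasure_space_1)
  also have "\<dots> = emeasure P ?S ^ m"
    by (subst P.product_nn_integral_prod) (auto simp: nn_integral_indicator)
  finally show ?thesis .
qed

lemma weight_nonneg: "0 \<le> weight t"
  unfolding weight_def by (simp add: sum_nonneg)

lemma weight_le: "weight t \<le> m"
proof -
  have "weight t \<le> (\<Sum>k\<in>{1..m}. 1)"
    unfolding weight_def using select_prob_le_1 by (intro sum_mono enn2real_leI) auto
  then show ?thesis by simp
qed

lemma weight_antimono: "0 \<le> t' \<Longrightarrow> t' \<le> t \<Longrightarrow> weight t \<le> weight t'"
  using select_prob_antimono
  by (subst ennreal_le_iff[symmetric, OF weight_nonneg]) (auto simp: ennreal_weight intro!: sum_mono)

lemma measurable_weight [measurable]: "(\<lambda>a. weight (dist x a)) \<in> borel_measurable P"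
  unfolding weight_def by measurable

lemma weight_lower:
  assumes "0 \<le> t"
  shows "m * measure P {a. t < dist x a} ^ (m - 1) \<le> weight t"
proof -
  interpret P: prob_space P by (rule prob_space_P)
  have "(\<Sum>k\<in>{1..m}. emeasure P {a. t < dist x a} ^ (m - 1)) \<le> ennreal (weight t)"
    unfolding ennreal_weight using assms by (intro sum_mono select_prob_lower) auto
  then show ?thesis
    by (simp add: P.emeasure_eq_measure ennreal_power ennreal_of_nat_eq_real_of_nat
        ennreal_le_iff weight_nonneg flip: ennreal_mult)
qed

lemma integral_selected:
  assumes [measurable]: "\<phi> \<in> borel_measurable P" and \<phi>: "\<And>a. 0 \<le> \<phi> a \<and> \<phi> a \<le> B"
  shows "(\<integral>w. \<phi> (selected (fst w) (snd w)) \<partial>(sample_space {1..m} \<Otimes>\<^sub>M N)) = (\<integral>a. \<phi> a * weight (dist x a) \<partial>P)"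
proof -
  interpret P: prob_space P by (rule prob_space_P)
  interpret Q: prob_space "sample_space {1..m} \<Otimes>\<^sub>M N"
    by (intro prob_space_pair prob_space_PP prob_space_N)
  have B: "0 \<le> B" using \<phi>[of undefined] by linarith
  have weighted: "0 \<le> \<phi> a * weight t \<and> \<phi> a * weight t \<le> B * m" for a t
    using \<phi>[of a] weight_nonneg[of t] weight_le[of t] B by (auto intro: mult_mono)
  have "ennreal (\<integral>w. \<phi> (selected (fst w) (snd w)) \<partial>(sample_space {1..m} \<Otimes>\<^sub>M N))
      = (\<integral>\<^sup>+w. ennreal (\<phi> (selected (fst w) (snd w))) \<partial>(sample_space {1..m} \<Otimes>\<^sub>M N))"
    using \<phi> by (intro Q.nn_integral_eq_integral_bounded[symmetric]) measurable
  also have "\<dots> = (\<integral>\<^sup>+a. ennreal (\<phi> a * weight (dist x a)) \<partial>P)"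
    using nn_integral_selected[of "\<lambda>a. ennreal (\<phi> a)"] \<phi> weight_nonneg by (simp add: ennreal_mult)
  also have "\<dots> = ennreal (\<integral>a. \<phi> a * weight (dist x a) \<partial>P)"
    using weighted by (intro P.nn_integral_eq_integral_bounded) measurable
  finally show ?thesis
    using \<phi> weighted by (simp add: ennreal_inj integral_nonneg)
qed

lemma integral_weight: "(\<integral>a. weight (dist x a) \<partial>P) = 1"
proof -
  interpret Q: prob_space "sample_space {1..m} \<Otimes>\<^sub>M N"
    by (intro prob_space_pair prob_space_PP prob_space_N)
  show ?thesis using integral_selected[of "\<lambda>_. 1" 1] Q.prob_space by simp
qed

lemma integral_tail_weight_le:
  "(\<integral>a. indicator {a. r < dist x a} a * weight (dist x a) \<partial>P) \<le> measure P {a. r < dist x a} ^ m"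
proof -
  interpret P: prob_space P by (rule prob_space_P)
  interpret Q: prob_space "sample_space {1..m} \<Otimes>\<^sub>M N"
    by (intro prob_space_pair prob_space_PP prob_space_N)
  let ?S = "{a. r < dist x a}"
  have "ennreal (\<integral>a. indicator ?S a * weight (dist x a) \<partial>P)
      = ennreal (\<integral>w. indicator ?S (selected (fst w) (snd w)) \<partial>(sample_space {1..m} \<Otimes>\<^sub>M N))"
    by (subst integral_selected[where B=1]) auto
  also have "\<dots> = (\<integral>\<^sup>+w. indicator ?S (selected (fst w) (snd w)) \<partial>(sample_space {1..m} \<Otimes>\<^sub>M N))"
    by (subst Q.nn_integral_eq_integral_bounded[where B=1, symmetric]) (measurable, auto simp: ennreal_indicator)
  also have "\<dots> \<le> emeasure P ?S ^ m"
    by (rule nn_integral_tail_selected_le)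
  also have "\<dots> = ennreal (measure P ?S ^ m)"
    by (simp add: P.emeasure_eq_measure ennreal_power)
  finally show ?thesis by (simp add: ennreal_le_iff)
qed

end

lemma count_multiples_le_bounds:
  fixes c h :: real and n :: nat
  assumes c: "0 < c" and h: "0 \<le> h" "h \<le> n * c"
  shows "c * (\<Sum>j\<in>{1..n}. if j * c \<le> h then 1 else 0) \<le> h"
    and "h \<le> c + c * (\<Sum>j\<in>{1..n}. if j * c \<le> h then 1 else 0)"
proof -
  define k where "k = nat \<lfloor>h / c\<rfloor>"
  have hc: "0 \<le> h / c" using c h by simp
  have kle: "real k \<le> h / c" unfolding k_def using hc by (simp add: of_nat_nat)
  have klt: "h / c < real k + 1" unfolding k_def using hc by (simp add: of_nat_nat)
  have "h / c \<le> n" using c h by (simp add: field_simps)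
  then have kn: "k \<le> n" using kle by linarith
  have set: "{j\<in>{1..n}. real j * c \<le> h} = {1..k}"
  proof (intro set_eqI iffI)
    fix j assume "j \<in> {j\<in>{1..n}. real j * c \<le> h}"
    then have "1 \<le> j" "real j \<le> h / c" using c by (auto simp: field_simps)
    then have "int j \<le> \<lfloor>h / c\<rfloor>" by (metis floor_mono floor_of_nat)
    then show "j \<in> {1..k}" using \<open>1 \<le> j\<close> unfolding k_def by auto
  next
    fix j assume "j \<in> {1..k}"
    then have "1 \<le> j" "j \<le> k" by auto
    then have "real j \<le> h / c" using kle by linarith
    then show "j \<in> {j\<in>{1..n}. real j * c \<le> h}" using c kn \<open>1 \<le> j\<close> \<open>j \<le> k\<close> by (auto simp: field_simps)
  qed
  have sum: "(\<Sum>j\<in>{1..n}. if j * c \<le> h then 1 else 0 :: real) = real k"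
  proof -
    have "(\<Sum>j\<in>{1..n}. if j * c \<le> h then 1 else 0 :: real) = (\<Sum>j\<in>{j\<in>{1..n}. real j * c \<le> h}. 1)"
      by (subst sum.inter_filter) auto
    also have "\<dots> = real k" unfolding set by simp
    finally show ?thesis .
  qed
  show "c * (\<Sum>j\<in>{1..n}. if j * c \<le> h then 1 else 0) \<le> h"
    unfolding sum using kle c by (simp add: field_simps)
  show "h \<le> c + c * (\<Sum>j\<in>{1..n}. if j * c \<le> h then 1 else 0)"
    unfolding sum using klt c by (simp add: field_simps)
qed

definition level_set :: "(real \<Rightarrow> real) \<Rightarrow> real \<Rightarrow> real \<Rightarrow> nat \<Rightarrow> real set" where
  "level_set g r c j = {u. 0 \<le> u \<and> u \<le> r \<and> real j * c \<le> g u}"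

definition level_count :: "(real \<Rightarrow> real) \<Rightarrow> real \<Rightarrow> real \<Rightarrow> nat \<Rightarrow> real \<Rightarrow> real" where
  "level_count g r c n t = (\<Sum>j\<in>{1..n}. indicator (level_set g r c j) t)"

lemma level_set_downset:
  assumes "\<And>t t'. 0 \<le> t' \<Longrightarrow> t' \<le> t \<Longrightarrow> g t \<le> g t'"
  shows "level_set g r c j \<subseteq> {0..r}"
    and "\<And>u u'. u \<in> level_set g r c j \<Longrightarrow> 0 \<le> u' \<Longrightarrow> u' \<le> u \<Longrightarrow> u' \<in> level_set g r c j"
  using assms by (auto simp: level_set_def intro: order.trans)

lemma level_count_nonneg: "0 \<le> level_count g r c n t"
  unfolding level_count_def by (intro sum_nonneg) auto

lemma level_count_bounds:
  assumes c: "0 < c" and g: "0 \<le> g t" "g t \<le> n * c"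
  shows "c * level_count g r c n t \<le> g t" and "level_count g r c n t \<le> n"
    and "0 \<le> t \<Longrightarrow> t \<le> r \<Longrightarrow> g t \<le> c + c * level_count g r c n t"
proof -
  have count: "level_count g r c n t = (\<Sum>j\<in>{1..n}. if j * c \<le> g t then 1 else 0)" if "0 \<le> t" "t \<le> r"
    unfolding level_count_def using that by (intro sum.cong refl) (auto simp: level_set_def indicator_def)
  show lower: "c * level_count g r c n t \<le> g t"
  proof (cases "0 \<le> t \<and> t \<le> r")
    case True
    then show ?thesis using count_multiples_le_bounds(1)[OF c g] count by simp
  next
    case False
    then have "level_count g r c n t = 0"
      unfolding level_count_def by (intro sum.neutral) (auto simp: level_set_def)
    then show ?thesis using g by simp
  qed
  from order.trans[OF this g(2)] c show "level_count g r c n t \<le> n"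
    by (simp add: mult.commute)
  show "g t \<le> c + c * level_count g r c n t" if "0 \<le> t" "t \<le> r"
    using count_multiples_le_bounds(2)[OF c g] count[OF that] by simp
qed

lemma exp_neg2_div_le_ceiling_mult_power:
  fixes u :: real
  assumes u: "0 < u" "u \<le> 1/2"
  shows "exp (-2) / u \<le> real (nat \<lceil>1/u\<rceil>) * (1 - u) ^ (nat \<lceil>1/u\<rceil> - 1)"
proof -
  define m where "m = nat \<lceil>1/u\<rceil>"
  have m1: "1 / u \<le> real m" unfolding m_def by linarith
  have "1 \<le> 1 / u" using u by simp
  then have "1 \<le> real m" using m1 by linarith
  then have mpos: "1 \<le> m" by simp
  have m2: "real (m - 1) \<le> 1 / u" using mpos unfolding m_def by (simp add: of_nat_diff) linarith
  have b1: "exp (-2 * u) \<le> 1 - u"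
  proof -
    have "1 + 2 * u \<le> exp (2 * u)" by (rule exp_ge_add_one_self_aux) (use u in simp)
    then have "(1 + 2 * u) * (1 - u) \<le> exp (2 * u) * (1 - u)" by (rule mult_right_mono) (use u in simp)
    moreover have "0 \<le> u * (1 - 2 * u)" using u by simp
    then have "1 \<le> (1 + 2 * u) * (1 - u)" by (simp add: algebra_simps)
    ultimately have "1 \<le> exp (2 * u) * (1 - u)" by linarith
    then show ?thesis by (simp add: exp_minus field_simps)
  qed
  have "exp (-2) \<le> exp (-2 * u * real (m - 1))"
    using m2 u by (simp add: field_simps)
  also have "\<dots> = exp (-2 * u) ^ (m - 1)" by (simp add: exp_of_nat_mult[symmetric] mult.commute mult.left_commute)
  also have "\<dots> \<le> (1 - u) ^ (m - 1)" by (rule power_mono[OF b1]) simp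
  finally have "exp (-2) \<le> (1 - u) ^ (m - 1)" .
  then have "exp (-2) / u \<le> (1 - u) ^ (m - 1) / u" using u by (simp add: divide_right_mono)
  also have "\<dots> = (1 / u) * (1 - u) ^ (m - 1)" by simp
  also have "\<dots> \<le> real m * (1 - u) ^ (m - 1)" by (rule mult_right_mono[OF m1]) (use u in simp)
  finally show ?thesis unfolding m_def .
qed

lemma downward_closed_interval_cases:
  fixes S :: "real set"
  assumes r: "0 \<le> r" and S: "S \<subseteq> {0..r}"
    and down: "\<And>u u'. u \<in> S \<Longrightarrow> 0 \<le> u' \<Longrightarrow> u' \<le> u \<Longrightarrow> u' \<in> S"
  obtains s where "0 \<le> s" "s \<le> r" "S = {0..s} \<or> S = {0..<s}"
proof (cases "S = {}")
  case True
  then show ?thesis using that[of 0] r by auto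
next
  case False
  define s where "s = Sup S"
  have bdd: "bdd_above S" using S by (auto intro!: bdd_aboveI[of _ r])
  have upper: "u \<le> s" if "u \<in> S" for u using cSup_upper[OF that bdd] by (simp add: s_def)
  have "s \<le> r" unfolding s_def using S False by (intro cSup_least) auto
  moreover have "0 \<le> s"
    using \<open>S \<noteq> {}\<close> upper S by (meson atLeastAtMost_iff ex_in_conv order.trans subsetD)
  moreover have "S = {0..s} \<or> S = {0..<s}"
  proof (cases "s \<in> S")
    case True
    have "S = {0..s}"
    proof
      show "S \<subseteq> {0..s}" using upper S by auto
      show "{0..s} \<subseteq> S" using down[OF True] by auto
    qed
    then show ?thesis ..
  next
    case False
    have "u \<in> S" if "0 \<le> u" "u < s" for u
    proof -
      obtain u' where "u' \<in> S" "u < u'"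
        using \<open>u < s\<close> less_cSup_iff[OF \<open>S \<noteq> {}\<close> bdd] by (auto simp: s_def)
      then show ?thesis using down that by force
    qed
    moreover have "u \<in> {0..<s}" if "u \<in> S" for u
      using upper[OF that] that S False by (cases "u = s") auto
    ultimately have "S = {0..<s}" by auto
    then show ?thesis ..
  qed
  ultimately show ?thesis using that by blast
qed

lemma dist_preimage_downset_cases:
  fixes x :: "'a::metric_space"
  assumes "0 \<le> r" "S \<subseteq> {0..r}" "\<And>u u'. u \<in> S \<Longrightarrow> 0 \<le> u' \<Longrightarrow> u' \<le> u \<Longrightarrow> u' \<in> S"
  obtains s where "0 \<le> s" "s \<le> r" "{a. dist x a \<in> S} = cball x s \<or> {a. dist x a \<in> S} = ball x s"
proof -
  obtain s where s: "0 \<le> s" "s \<le> r" and S: "S = {0..s} \<or> S = {0..<s}"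
    by (rule downward_closed_interval_cases[OF assms])
  have "{a. dist x a \<in> {0..s}} = cball x s" "{a. dist x a \<in> {0..<s}} = ball x s"
    by (auto simp: cball_def ball_def)
  with S have "{a. dist x a \<in> S} = cball x s \<or> {a. dist x a \<in> S} = ball x s"
    by blast
  with s show ?thesis by (rule that)
qed

lemma indicator_cball_tendsto_indicator_ball:
  fixes x :: "'a::metric_space"
  assumes "0 < s"
  shows "(\<lambda>n. indicator (cball x (s - s / (real n + 2))) a) \<longlonglongrightarrow> (indicator (ball x s) a :: real)"
proof (cases "dist x a < s")
  case True
  have "filterlim (\<lambda>n::nat. real n + 2) at_top sequentially"
    using filterlim_tendsto_add_at_top[OF tendsto_const[of "2::real"] filterlim_real_sequentially]
    by (simp add: add.commute)
  then have "(\<lambda>n. s / (real n + 2)) \<longlonglongrightarrow> 0"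
    by (intro tendsto_divide_0[OF tendsto_const] filterlim_at_top_imp_at_infinity)
  then have "(\<lambda>n. s - s / (real n + 2)) \<longlonglongrightarrow> s"
    using tendsto_diff[OF tendsto_const[of s]] by fastforce
  from order_tendstoD(1)[OF this True]
  have "eventually (\<lambda>n. dist x a < s - s / (real n + 2)) sequentially" .
  then have "eventually (\<lambda>n. indicator (cball x (s - s / (real n + 2))) a = (1::real)) sequentially"
    by eventually_elim (simp add: indicator_def)
  then show ?thesis
    using True by (simp add: tendsto_eventually)
next
  case False
  have "s - s / (real n + 2) < dist x a" for n
    using False divide_pos_pos[OF assms, of "real n + 2"] by linarith
  then have "indicator (cball x (s - s / (real n + 2))) a = (0::real)" for n
    by (simp add: indicator_def not_le)
  with False show ?thesis by simp
qed

text \<open>\<open>w m\<close> stands for the density, as a function of the distance to \<open>x\<close>, of the law of the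
  nearest neighbour among \<open>m\<close> points; only the properties assumed here are used.\<close>

locale radial_weights =
  fixes P :: "'a::metric_space measure" and \<eta> :: "'a \<Rightarrow> real" and x :: 'a and C :: real
    and w :: "nat \<Rightarrow> real \<Rightarrow> real"
  assumes prob_space_P: "prob_space P" and sets_P: "sets P = sets borel"
    and \<eta>_measurable: "\<eta> \<in> borel_measurable borel"
    and deviation_bounded: "\<And>a. \<bar>\<eta> a - \<eta> x\<bar> \<le> C"
    and support: "\<And>r. 0 < r \<Longrightarrow> 0 < measure P (cball x r)"
    and integral_w: "\<And>m. 1 \<le> m \<Longrightarrow> (\<integral>a. w m (dist x a) \<partial>P) = 1"
    and tail_w: "\<And>m r. 1 \<le> m \<Longrightarrow>
      (\<integral>a. indicator {a. r < dist x a} a * w m (dist x a) \<partial>P) \<le> measure P {a. r < dist x a} ^ m"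
    and w_antimono: "\<And>m t t'. 1 \<le> m \<Longrightarrow> 0 \<le> t' \<Longrightarrow> t' \<le> t \<Longrightarrow> w m t \<le> w m t'"
    and w_bounds: "\<And>m t. 1 \<le> m \<Longrightarrow> 0 \<le> w m t \<and> w m t \<le> m"
    and w_lower: "\<And>m t. 1 \<le> m \<Longrightarrow> 0 \<le> t \<Longrightarrow> m * measure P {a. t < dist x a} ^ (m - 1) \<le> w m t"
    and measurable_w: "\<And>m. 1 \<le> m \<Longrightarrow> (\<lambda>a. w m (dist x a)) \<in> borel_measurable P"
begin

abbreviation "f a \<equiv> \<bar>\<eta> a - \<eta> x\<bar>"
abbreviation "F r \<equiv> measure P (cball x r)"

definition risk :: "nat \<Rightarrow> real" where
  "risk m = (\<integral>a. f a * w m (dist x a) \<partial>P)"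

lemma space_P [simp]: "space P = UNIV"
  using sets_P by (metis sets_eq_imp_space_eq space_borel)

lemma measurable_\<eta> [measurable]: "\<eta> \<in> borel_measurable P"
  by (subst measurable_cong_sets[OF sets_P refl]) (rule \<eta>_measurable)

lemma measurable_dist_P [measurable]: "(\<lambda>a. dist x a) \<in> borel_measurable P"
  by (subst measurable_cong_sets[OF sets_P refl])
     (intro borel_measurable_continuous_onI continuous_intros)

lemma sets_cball [measurable]: "cball x r \<in> sets P"
  using sets_P by simp

lemma sets_ball [measurable]: "ball x r \<in> sets P"
  using sets_P by simp

lemma C_nonneg: "0 \<le> C"
  using deviation_bounded[of x] by simp

lemma integrable_bounded:
  fixes g :: "'a \<Rightarrow> real"
  assumes "g \<in> borel_measurable P" "\<And>a. \<bar>g a\<bar> \<le> B"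
  shows "integrable P g"
proof -
  interpret P: prob_space P by (rule prob_space_P)
  show ?thesis using assms by (intro P.integrable_const_bound[where B=B]) auto
qed

lemma integral_ball_le:
  assumes cball_le: "\<And>s. 0 < s \<Longrightarrow> s \<le> r \<Longrightarrow> (\<integral>a. indicator (cball x s) a * f a \<partial>P) \<le> e * F s"
    and s: "0 < s" "s \<le> r"
  shows "(\<integral>a. indicator (ball x s) a * f a \<partial>P) \<le> e * measure P (ball x s)"
proof -
  interpret P: prob_space P by (rule prob_space_P)
  define s' where "s' n = s - s / (real n + 2)" for n :: nat
  have s'_pos: "0 < s' n" and s'_less: "s' n < s" for n
    using s by (auto simp: s'_def field_simps add_pos_nonneg)
  have cball_to_ball: "(\<lambda>n. indicator (cball x (s' n)) a) \<longlonglongrightarrow> (indicator (ball x s) a :: real)" for a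
    unfolding s'_def by (rule indicator_cball_tendsto_indicator_ball[OF s(1)])
  have lim_integral: "(\<lambda>n. \<integral>a. indicator (cball x (s' n)) a * f a \<partial>P) \<longlonglongrightarrow> (\<integral>a. indicator (ball x s) a * f a \<partial>P)"
  proof (rule integral_dominated_convergence[where w="\<lambda>_. C"])
    show "AE a in P. (\<lambda>n. indicator (cball x (s' n)) a * f a) \<longlonglongrightarrow> indicator (ball x s) a * f a"
      by (intro AE_I2 tendsto_mult cball_to_ball tendsto_const)
    show "AE a in P. norm (indicator (cball x (s' n)) a * f a) \<le> C" for n
      using deviation_bounded C_nonneg by (intro AE_I2) (auto simp: indicator_def)
  qed auto
  have "(\<lambda>n. \<integral>a. indicator (cball x (s' n)) a * 1 \<partial>P) \<longlonglongrightarrow> (\<integral>a. indicator (ball x s) a * (1::real) \<partial>P)"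
  proof (rule integral_dominated_convergence[where w="\<lambda>_. 1"])
    show "AE a in P. (\<lambda>n. indicator (cball x (s' n)) a * 1) \<longlonglongrightarrow> indicator (ball x s) a * (1::real)"
      by (intro AE_I2 tendsto_mult cball_to_ball tendsto_const)
    show "AE a in P. norm (indicator (cball x (s' n)) a * 1 :: real) \<le> 1" for n
      by (intro AE_I2) (auto simp: indicator_def)
  qed auto
  then have lim_measure: "(\<lambda>n. e * F (s' n)) \<longlonglongrightarrow> e * measure P (ball x s)"
    by (intro tendsto_mult tendsto_const) simp
  have "(\<integral>a. indicator (cball x (s' n)) a * f a \<partial>P) \<le> e * F (s' n)" for n
    using s'_less[of n] s by (intro cball_le s'_pos) linarith
  then show ?thesis by (intro LIMSEQ_le[OF lim_integral lim_measure]) auto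
qed

lemma measure_cball_mono: "r \<le> r' \<Longrightarrow> F r \<le> F r'"
  using prob_space.finite_measure[OF prob_space_P]
  by (intro finite_measure.finite_measure_mono) (auto simp: subset_eq)

lemma measure_dist_gt: "measure P {a. r < dist x a} = 1 - F r"
proof -
  interpret P: prob_space P by (rule prob_space_P)
  have "{a. r < dist x a} = space P - cball x r" by auto
  then show ?thesis using P.prob_compl[of "cball x r"] by simp
qed

lemma sets_dist_downset:
  assumes "0 \<le> r" "S \<subseteq> {0..r}" "\<And>u u'. u \<in> S \<Longrightarrow> 0 \<le> u' \<Longrightarrow> u' \<le> u \<Longrightarrow> u' \<in> S"
  shows "{a. dist x a \<in> S} \<in> sets P"
proof -
  obtain s where "{a. dist x a \<in> S} = cball x s \<or> {a. dist x a \<in> S} = ball x s"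
    by (rule dist_preimage_downset_cases[OF assms])
  then show ?thesis by auto
qed

lemma integral_downset_le:
  assumes e: "0 \<le> e" and r: "0 \<le> r"
    and cball_le: "\<And>s. 0 < s \<Longrightarrow> s \<le> r \<Longrightarrow> (\<integral>a. indicator (cball x s) a * f a \<partial>P) \<le> e * F s"
    and S: "S \<subseteq> {0..r}" and down: "\<And>u u'. u \<in> S \<Longrightarrow> 0 \<le> u' \<Longrightarrow> u' \<le> u \<Longrightarrow> u' \<in> S"
  shows "(\<integral>a. indicator S (dist x a) * f a \<partial>P) \<le> e * measure P {a. dist x a \<in> S}"
proof -
  obtain s where s: "0 \<le> s" "s \<le> r"
    and ball: "{a. dist x a \<in> S} = cball x s \<or> {a. dist x a \<in> S} = ball x s"
    by (rule dist_preimage_downset_cases[OF r S down])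
  have "(\<integral>a. indicator {a. dist x a \<in> S} a * f a \<partial>P) \<le> e * measure P {a. dist x a \<in> S}"
  proof (cases "s = 0")
    case True
    with ball have "indicator {a. dist x a \<in> S} a * f a = 0" for a
      by (auto simp: indicator_def)
    then have "(\<integral>a. indicator {a. dist x a \<in> S} a * f a \<partial>P) = (\<integral>a. 0 \<partial>P)"
      by (intro Bochner_Integration.integral_cong refl)
    then show ?thesis using e by simp
  next
    case False
    with s have "0 < s" by simp
    from ball show ?thesis
    proof
      assume "{a. dist x a \<in> S} = cball x s"
      then show ?thesis using cball_le[OF \<open>0 < s\<close> s(2)] by simp
    next
      assume "{a. dist x a \<in> S} = ball x s"
      then show ?thesis using integral_ball_le[OF cball_le \<open>0 < s\<close> s(2)] by simp
    qed
  qed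
  then show ?thesis by (simp add: indicator_def)
qed

lemma measurable_indicator_dist_downset:
  assumes "0 \<le> r" "S \<subseteq> {0..r}" "\<And>u u'. u \<in> S \<Longrightarrow> 0 \<le> u' \<Longrightarrow> u' \<le> u \<Longrightarrow> u' \<in> S"
  shows "(\<lambda>a. indicator S (dist x a) :: real) \<in> borel_measurable P"
proof -
  have "(\<lambda>a. indicator S (dist x a) :: real) = indicator {a. dist x a \<in> S}"
    by (auto simp: indicator_def)
  then show ?thesis using sets_dist_downset[OF assms] by simp
qed

lemma integral_sum_downsets_le:
  assumes e: "0 \<le> e" and r: "0 \<le> r"
    and cball_le: "\<And>s. 0 < s \<Longrightarrow> s \<le> r \<Longrightarrow> (\<integral>a. indicator (cball x s) a * f a \<partial>P) \<le> e * F s"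
    and S: "\<And>j. j \<in> J \<Longrightarrow> S j \<subseteq> {0..r}"
    and down: "\<And>j u u'. j \<in> J \<Longrightarrow> u \<in> S j \<Longrightarrow> 0 \<le> u' \<Longrightarrow> u' \<le> u \<Longrightarrow> u' \<in> S j"
  shows "(\<integral>a. (\<Sum>j\<in>J. indicator (S j) (dist x a)) * f a \<partial>P)
    \<le> e * (\<integral>a. (\<Sum>j\<in>J. indicator (S j) (dist x a)) \<partial>P)"
proof -
  note measurable = measurable_indicator_dist_downset[OF r S down]
  have "integrable P (\<lambda>a. indicator (S j) (dist x a) * f a)" if "j \<in> J" for j
    using deviation_bounded C_nonneg
    by (intro integrable_bounded[where B=C] borel_measurable_times measurable[OF that that])
       (auto simp: indicator_def)
  then have "(\<integral>a. (\<Sum>j\<in>J. indicator (S j) (dist x a)) * f a \<partial>P)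
      = (\<Sum>j\<in>J. \<integral>a. indicator (S j) (dist x a) * f a \<partial>P)"
    unfolding sum_distrib_right by (intro Bochner_Integration.integral_sum)
  also have "\<dots> \<le> (\<Sum>j\<in>J. e * measure P {a. dist x a \<in> S j})"
    by (intro sum_mono integral_downset_le[OF e r cball_le S down])
  also have "\<dots> = e * (\<integral>a. (\<Sum>j\<in>J. indicator (S j) (dist x a)) \<partial>P)"
  proof -
    have "(\<lambda>a. indicator (S j) (dist x a)) = (indicator {a. dist x a \<in> S j} :: 'a \<Rightarrow> real)" for j
      by (auto simp: indicator_def)
    then have "measure P {a. dist x a \<in> S j} = (\<integral>a. indicator (S j) (dist x a) \<partial>P)" if "j \<in> J" for j
      using sets_dist_downset[OF r S down, OF that that] by simp
    moreover have "integrable P (\<lambda>a. indicator (S j) (dist x a) :: real)" if "j \<in> J" for j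
      by (rule integrable_bounded[OF measurable[OF that that], where B=1]) (auto simp: indicator_def)
    ultimately show ?thesis
      by (simp add: Bochner_Integration.integral_sum sum_distrib_left)
  qed
  finally show ?thesis .
qed

lemma integral_level_count_le:
  assumes e: "0 \<le> e" and r: "0 \<le> r"
    and cball_le: "\<And>s. 0 < s \<Longrightarrow> s \<le> r \<Longrightarrow> (\<integral>a. indicator (cball x s) a * f a \<partial>P) \<le> e * F s"
    and g_antimono: "\<And>t t'. 0 \<le> t' \<Longrightarrow> t' \<le> t \<Longrightarrow> g t \<le> g t'"
  shows "(\<lambda>a. level_count g r c n (dist x a)) \<in> borel_measurable P"
    and "(\<integral>a. level_count g r c n (dist x a) * f a \<partial>P) \<le> e * (\<integral>a. level_count g r c n (dist x a) \<partial>P)"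
  using measurable_indicator_dist_downset[OF r level_set_downset[OF g_antimono]]
    integral_sum_downsets_le[OF e r cball_le level_set_downset[OF g_antimono]]
  unfolding level_count_def by auto

text \<open>A discrete layer-cake argument: \<open>g\<close> is sandwiched between \<open>c\<close> times the number of its
  level sets at heights \<open>c, 2c, \<dots>, nc\<close> containing the distance and that plus \<open>c\<close>, and each level
  set is a ball, on which the average of \<open>f\<close> is at most \<open>e\<close>.\<close>

lemma integral_antimono_weight_le:
  fixes g :: "real \<Rightarrow> real" and c :: real and n :: nat
  assumes e: "0 \<le> e" and r: "0 \<le> r"
    and cball_le: "\<And>s. 0 < s \<Longrightarrow> s \<le> r \<Longrightarrow> (\<integral>a. indicator (cball x s) a * f a \<partial>P) \<le> e * F s"
    and c: "0 < c" and g_antimono: "\<And>t t'. 0 \<le> t' \<Longrightarrow> t' \<le> t \<Longrightarrow> g t \<le> g t'"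
    and g_bounds: "\<And>t. 0 \<le> g t \<and> g t \<le> n * c"
    and g_measurable [measurable]: "(\<lambda>a. g (dist x a)) \<in> borel_measurable P"
  shows "(\<integral>a. f a * g (dist x a) * indicator (cball x r) a \<partial>P) \<le> C * c + e * (\<integral>a. g (dist x a) \<partial>P)"
proof -
  interpret P: prob_space P by (rule prob_space_P)
  define K where "K a = level_count g r c n (dist x a)" for a
  have K_measurable [measurable]: "K \<in> borel_measurable P"
    using integral_level_count_le(1)[where g=g and c=c and n=n, OF e r cball_le g_antimono]
    by (simp add: K_def[abs_def])
  have K_bounds: "c * K a \<le> g (dist x a)" "K a \<le> n" "dist x a \<le> r \<Longrightarrow> g (dist x a) \<le> c + c * K a"
    for a
    using level_count_bounds[where g=g and r=r and n=n and t="dist x a", OF c g_bounds[THEN conjunct1]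
        g_bounds[THEN conjunct2]]
    by (simp_all add: K_def)
  have K_nonneg: "0 \<le> K a" for a by (simp add: K_def level_count_nonneg)
  have integrable_Kf: "integrable P (\<lambda>a. K a * f a)"
    by (rule integrable_bounded[where B="n * C"])
       (use K_nonneg K_bounds(2) deviation_bounded C_nonneg in \<open>auto simp: abs_mult intro!: mult_mono\<close>)
  have "f a * g (dist x a) * indicator (cball x r) a \<le> C * c + c * (K a * f a)" for a
  proof (cases "dist x a \<le> r")
    case True
    then have "f a * g (dist x a) \<le> f a * (c + c * K a)"
      using K_bounds(3)[of a] by (intro mult_left_mono) auto
    also have "\<dots> \<le> C * c + c * (K a * f a)"
      using deviation_bounded[of a] c by (simp add: algebra_simps mult_right_mono)
    finally show ?thesis using True by simp
  qed (use c C_nonneg K_nonneg in simp)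
  then have "(\<integral>a. f a * g (dist x a) * indicator (cball x r) a \<partial>P) \<le> (\<integral>a. C * c + c * (K a * f a) \<partial>P)"
    using C_nonneg c K_nonneg integrable_Kf
    by (intro integral_mono') (auto intro!: mult_nonneg_nonneg Bochner_Integration.integrable_add)
  also have "\<dots> = C * c + c * (\<integral>a. K a * f a \<partial>P)"
    using integrable_Kf P.prob_space by simp
  also have "\<dots> \<le> C * c + e * (\<integral>a. c * K a \<partial>P)"
  proof -
    have "(\<integral>a. K a * f a \<partial>P) \<le> e * (\<integral>a. K a \<partial>P)"
      using integral_level_count_le(2)[where g=g and c=c and n=n, OF e r cball_le g_antimono]
      by (simp add: K_def)
    from mult_left_mono[OF this] c show ?thesis by (simp add: mult.left_commute)
  qed
  also have "\<dots> \<le> C * c + e * (\<integral>a. g (dist x a) \<partial>P)"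
    using K_nonneg K_bounds(2) g_bounds e c
    by (intro add_left_mono mult_left_mono integral_mono[OF _ _ K_bounds(1)]
        integrable_bounded[where B="n * c"]) (auto simp: abs_mult intro: mult_mono)
  finally show ?thesis .
qed

lemma integral_near_le:
  fixes m :: nat
  assumes m: "1 \<le> m" and e: "0 \<le> e" and r: "0 \<le> r"
    and cball_le: "\<And>s. 0 < s \<Longrightarrow> s \<le> r \<Longrightarrow> (\<integral>a. indicator (cball x s) a * f a \<partial>P) \<le> e * F s"
  shows "(\<integral>a. f a * w m (dist x a) * indicator (cball x r) a \<partial>P) \<le> e"
proof (rule LIMSEQ_le_const)
  show "(\<lambda>n. C * (real m / real n) + e) \<longlonglongrightarrow> e"
    using tendsto_add[OF tendsto_mult[OF tendsto_const lim_const_over_n] tendsto_const, of C m e] by simp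
  have "(\<integral>a. f a * w m (dist x a) * indicator (cball x r) a \<partial>P) \<le> C * (real m / real n) + e" if "1 \<le> n" for n
    using integral_antimono_weight_le[OF e r cball_le, of "real m / real n" "w m" n] that m
      w_antimono w_bounds measurable_w integral_w
    by simp
  then show "\<exists>N. \<forall>n\<ge>N. (\<integral>a. f a * w m (dist x a) * indicator (cball x r) a \<partial>P) \<le> C * (real m / real n) + e"
    by blast
qed

lemma risk_nonneg: "1 \<le> m \<Longrightarrow> 0 \<le> risk m"
  unfolding risk_def using w_bounds by (intro integral_nonneg_AE) auto

lemma risk_le_near_plus_tail:
  assumes m: "1 \<le> m"
  shows "risk m \<le> (\<integral>a. f a * w m (dist x a) * indicator (cball x r) a \<partial>P)
    + C * measure P {a. r < dist x a} ^ m"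
proof -
  note [measurable] = measurable_w[OF m]
  have bounded: "\<bar>f a * w m (dist x a) * indicator A a\<bar> \<le> C * m" for a and A :: "'a set"
    using deviation_bounded w_bounds[OF m] C_nonneg by (auto simp: indicator_def abs_mult intro!: mult_mono)
  have "risk m = (\<integral>a. f a * w m (dist x a) * indicator (cball x r) a
      + f a * w m (dist x a) * indicator {a. r < dist x a} a \<partial>P)"
    unfolding risk_def by (intro Bochner_Integration.integral_cong) (auto simp: indicator_def)
  also have "\<dots> = (\<integral>a. f a * w m (dist x a) * indicator (cball x r) a \<partial>P)
      + (\<integral>a. f a * w m (dist x a) * indicator {a. r < dist x a} a \<partial>P)"
    by (intro Bochner_Integration.integral_add integrable_bounded[OF _ bounded]) measurable
  also have "(\<integral>a. f a * w m (dist x a) * indicator {a. r < dist x a} a \<partial>P)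
      \<le> (\<integral>a. C * (indicator {a. r < dist x a} a * w m (dist x a)) \<partial>P)"
    using deviation_bounded w_bounds[OF m] C_nonneg
    by (intro integral_mono integrable_bounded[OF _ bounded] integrable_bounded[where B="C * m"])
       (auto simp: indicator_def abs_mult intro!: mult_right_mono mult_mono C_nonneg)
  also have "\<dots> \<le> C * measure P {a. r < dist x a} ^ m"
    using mult_left_mono[OF tail_w[OF m] C_nonneg] by simp
  finally show ?thesis by simp
qed

definition ball_average :: "real \<Rightarrow> real" where
  "ball_average r = (\<integral>a. indicator (cball x r) a * f a \<partial>P) / F r"

lemma lebesgue_point_iff_ball_average: "lebesgue_point P \<eta> x \<longleftrightarrow> (ball_average \<longlongrightarrow> 0) (at_right 0)"
  unfolding lebesgue_point_def ball_average_def ..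

lemma risk_tendsto_0_if_lebesgue_point:
  assumes "lebesgue_point P \<eta> x"
  shows "risk \<longlonglongrightarrow> 0"
proof (rule LIMSEQ_I)
  fix \<epsilon> :: real assume "0 < \<epsilon>"
  then have e: "0 < \<epsilon> / 2" by simp
  from order_tendstoD(2)[OF assms[unfolded lebesgue_point_iff_ball_average] e]
  obtain b where b: "0 < b" "\<And>s. 0 < s \<Longrightarrow> s < b \<Longrightarrow> ball_average s < \<epsilon> / 2"
    unfolding eventually_at_right_field by auto
  define r where "r = b / 2"
  have r: "0 < r" "r < b" using b by (auto simp: r_def)
  have cball_le: "(\<integral>a. indicator (cball x s) a * f a \<partial>P) \<le> \<epsilon> / 2 * F s" if "0 < s" "s \<le> r" for s
    using b(2)[of s] that r support[OF \<open>0 < s\<close>] by (simp add: ball_average_def divide_less_eq)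
  define q where "q = measure P {a. r < dist x a}"
  have "0 \<le> q" "q < 1"
    using support[OF r(1)] prob_space.prob_le_1[OF prob_space_P, of "cball x r"]
    by (auto simp: q_def measure_dist_gt)
  then have "(\<lambda>m. C * q ^ m) \<longlonglongrightarrow> 0"
    using tendsto_mult[OF tendsto_const LIMSEQ_power_zero, of q C] by simp
  from order_tendstoD(2)[OF this e] obtain N where N: "\<And>m. N \<le> m \<Longrightarrow> C * q ^ m < \<epsilon> / 2"
    unfolding eventually_sequentially by blast
  have "\<bar>risk m\<bar> < \<epsilon>" if "max N 1 \<le> m" for m
  proof -
    have m: "1 \<le> m" "N \<le> m" using that by auto
    have "risk m \<le> \<epsilon> / 2 + C * q ^ m"
      using risk_le_near_plus_tail[OF m(1), of r] integral_near_le[where e="\<epsilon> / 2" and r=r, OF m(1) _ _ cball_le] e r(1)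
      by (simp add: q_def)
    then show ?thesis using N[OF m(2)] risk_nonneg[OF m(1)] by simp
  qed
  then show "\<exists>N. \<forall>m\<ge>N. norm (risk m - 0) < \<epsilon>" by (intro exI[of _ "max N 1"]) simp
qed

lemma measure_cball_tendsto: "(F \<longlongrightarrow> F 0) (at_right 0)"
proof -
  interpret P: prob_space P by (rule prob_space_P)
  have "(\<Inter>n. cball x (1 / Suc n)) = cball x 0"
  proof (intro set_eqI iffI)
    fix y assume "y \<in> (\<Inter>n. cball x (1 / Suc n))"
    then have "dist x y \<le> 1 / Suc n" for n by auto
    then have "dist x y \<le> 0"
      by (intro LIMSEQ_le_const[OF LIMSEQ_Suc[OF lim_const_over_n[of 1]]]) auto
    then show "y \<in> cball x 0" by simp
  qed auto
  moreover have "(\<lambda>n. F (1 / Suc n)) \<longlonglongrightarrow> measure P (\<Inter>n. cball x (1 / Suc n))"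
  proof (rule P.finite_Lim_measure_decseq)
    have "1 / real (Suc n) \<le> 1 / real (Suc m)" if "m \<le> n" for m n
      by (rule divide_left_mono) (use that in auto)
    then show "decseq (\<lambda>n. cball x (1 / real (Suc n)))"
      unfolding decseq_def by (auto simp: subset_eq) (meson order_trans)
  qed auto
  ultimately have lim: "(\<lambda>n. F (1 / Suc n)) \<longlonglongrightarrow> F 0" by simp
  show ?thesis
  proof (rule order_tendstoI)
    fix a assume "a < F 0"
    then show "eventually (\<lambda>r. a < F r) (at_right 0)"
      unfolding eventually_at_right_field
    proof (intro exI[of _ 1] conjI allI impI)
      fix r :: real assume "0 < r"
      then show "a < F r" using measure_cball_mono[of 0 r] \<open>a < F 0\<close> by linarith
    qed simp
  next
    fix a assume "F 0 < a"
    then obtain n where "F (1 / Suc n) < a"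
      using order_tendstoD(2)[OF lim] by (auto simp: eventually_sequentially)
    then show "eventually (\<lambda>r. F r < a) (at_right 0)"
      unfolding eventually_at_right_field
    proof (intro exI[of _ "1 / Suc n"] conjI allI impI)
      fix r :: real assume "0 < r" "r < 1 / Suc n"
      then show "F r < a" using measure_cball_mono[of r "1 / Suc n"] \<open>F (1 / Suc n) < a\<close> by linarith
    qed simp
  qed
qed

lemma integral_cball_nonneg: "0 \<le> (\<integral>a. indicator (cball x r) a * f a \<partial>P)"
  by (rule integral_nonneg_AE) (auto simp: indicator_def)

lemma ball_average_nonneg: "0 \<le> ball_average r"
  unfolding ball_average_def using integral_cball_nonneg by simp

lemma integral_cball_le_atom:
  assumes "0 \<le> r"
  shows "(\<integral>a. indicator (cball x r) a * f a \<partial>P) \<le> C * (F r - F 0)"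
proof -
  have "(\<integral>a. indicator (cball x r) a * f a \<partial>P) \<le> (\<integral>a. C * (indicator (cball x r) a - indicator (cball x 0) a) \<partial>P)"
  proof (rule integral_mono')
    show "integrable P (\<lambda>a. C * (indicator (cball x r) a - indicator (cball x 0) a))"
    proof (rule integrable_bounded[where B="\<bar>C\<bar>"])
      show "(\<lambda>a. C * (indicator (cball x r) a - indicator (cball x 0) a)) \<in> borel_measurable P"
        by measurable
    qed (auto simp: indicator_def)
    show "indicator (cball x r) a * f a \<le> C * (indicator (cball x r) a - indicator (cball x 0) a)" for a
      using deviation_bounded[of a] C_nonneg assms by (cases "a = x") (auto simp: indicator_def)
    show "0 \<le> C * (indicator (cball x r) a - indicator (cball x 0) a)" for a
      using C_nonneg assms by (auto simp: indicator_def)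
  qed
  also have "\<dots> = C * (F r - F 0)"
  proof -
    have "integrable P (indicator (cball x s) :: 'a \<Rightarrow> real)" for s
      by (intro integrable_bounded[where B=1] borel_measurable_indicator sets_cball) (auto simp: indicator_def)
    from Bochner_Integration.integral_diff[OF this this, of r 0]
    show ?thesis by (simp del: cball_trivial)
  qed
  finally show ?thesis .
qed

text \<open>At an atom the ball averages are squeezed to \<open>0\<close> by the right-continuity of \<open>F\<close>.\<close>

lemma lebesgue_point_if_atom:
  assumes "0 < F 0"
  shows "lebesgue_point P \<eta> x"
  unfolding lebesgue_point_iff_ball_average
proof (rule tendsto_sandwich[OF _ _ tendsto_const])
  have "((\<lambda>r. C * (F r - F 0) / F 0) \<longlongrightarrow> C * (F 0 - F 0) / F 0) (at_right 0)"
    using assms by (intro tendsto_intros measure_cball_tendsto) simp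
  then show "((\<lambda>r. C * (F r - F 0) / F 0) \<longlongrightarrow> 0) (at_right 0)" by simp
  show "eventually (\<lambda>r. 0 \<le> ball_average r) (at_right 0)"
    by (simp add: ball_average_nonneg)
  show "eventually (\<lambda>r. ball_average r \<le> C * (F r - F 0) / F 0) (at_right 0)"
  proof (rule eventually_at_rightI[of 0 1])
    fix r :: real assume "r \<in> {0<..<1}"
    then have "0 \<le> r" "F 0 \<le> F r" using measure_cball_mono[of 0 r] by auto
    then have "ball_average r \<le> (\<integral>a. indicator (cball x r) a * f a \<partial>P) / F 0"
      unfolding ball_average_def using assms integral_cball_nonneg by (intro divide_left_mono) auto
    also have "\<dots> \<le> C * (F r - F 0) / F 0"
      using integral_cball_le_atom[OF \<open>0 \<le> r\<close>] assms by (intro divide_right_mono) auto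
    finally show "ball_average r \<le> C * (F r - F 0) / F 0" .
  qed simp
qed

text \<open>With \<open>m = \<lceil>1 / F r\<rceil>\<close> neighbours the weight is at least \<open>m (1 - F r)^(m-1) \<ge> e\<^sup>-\<^sup>2 / F r\<close>
  on the whole ball \<open>cball x r\<close>.\<close>

lemma ball_average_le_risk:
  assumes r: "0 < r" and u: "F r \<le> 1/2"
  shows "ball_average r \<le> exp 2 * risk (nat \<lceil>1 / F r\<rceil>)"
proof -
  define u where "u = F r"
  have u0: "0 < u" using support[OF r] by (simp add: u_def)
  define m where "m = nat \<lceil>1 / u\<rceil>"
  have "1 \<le> 1 / u" using u0 u by (simp add: u_def)
  then have m1: "1 \<le> m" unfolding m_def by linarith
  note [measurable] = measurable_w[OF m1]
  define K where "K = real m * (1 - u) ^ (m - 1)"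
  have "exp (-2) / u \<le> K"
    unfolding K_def m_def by (rule exp_neg2_div_le_ceiling_mult_power[OF u0]) (use u in \<open>simp add: u_def\<close>)
  have K_le_w: "K \<le> w m (dist x a)" if "a \<in> cball x r" for a
  proof -
    have "1 - u \<le> measure P {b. dist x a < dist x b}"
      using measure_cball_mono[of "dist x a" r] that by (simp add: measure_dist_gt u_def)
    then have "(1 - u) ^ (m - 1) \<le> measure P {b. dist x a < dist x b} ^ (m - 1)"
      by (rule power_mono) (use u in \<open>simp add: u_def\<close>)
    then show ?thesis
      using w_lower[OF m1, of "dist x a"] unfolding K_def
      by (meson mult_left_mono of_nat_0_le_iff order_trans zero_le_dist)
  qed
  have "(\<integral>a. K * (indicator (cball x r) a * f a) \<partial>P) \<le> (\<integral>a. f a * w m (dist x a) \<partial>P)"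
  proof (rule integral_mono')
    show "integrable P (\<lambda>a. f a * w m (dist x a))"
      by (rule integrable_bounded[where B="C * m"])
         (use deviation_bounded w_bounds[OF m1] C_nonneg in \<open>auto simp: abs_mult intro!: mult_mono\<close>)
    show "0 \<le> f a * w m (dist x a)" for a using w_bounds[OF m1] by simp
    show "K * (indicator (cball x r) a * f a) \<le> f a * w m (dist x a)" for a
      using K_le_w[of a] w_bounds[OF m1] by (cases "a \<in> cball x r") (auto simp: mult.commute mult_right_mono)
  qed
  then have "K * (u * ball_average r) \<le> risk m"
    using u0 by (simp add: risk_def ball_average_def u_def)
  moreover have "exp (-2) / u * (u * ball_average r) \<le> K * (u * ball_average r)"
    using \<open>exp (-2) / u \<le> K\<close> u0 ball_average_nonneg[of r] by (intro mult_right_mono) simp_all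
  ultimately have "exp (-2) * ball_average r \<le> risk m"
    using u0 by simp
  then show ?thesis by (simp add: exp_minus field_simps u_def m_def)
qed

lemma lebesgue_point_if_risk_tendsto_0:
  assumes risk: "risk \<longlonglongrightarrow> 0"
  shows "lebesgue_point P \<eta> x"
proof (cases "0 < F 0")
  case True
  then show ?thesis by (rule lebesgue_point_if_atom)
next
  case False
  then have "F 0 = 0" using measure_nonneg[of P "cball x 0"] by linarith
  then have F: "(F \<longlongrightarrow> 0) (at_right 0)" using measure_cball_tendsto by simp
  have pos: "eventually (\<lambda>r. 0 < r) (at_right (0::real))"
    by (simp add: eventually_at_right_less)
  have "filterlim (\<lambda>r. nat \<lceil>1 / F r\<rceil>) at_top (at_right 0)"
    unfolding filterlim_at_top
  proof
    fix k :: nat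
    have "eventually (\<lambda>r. F r < 1 / (real k + 1)) (at_right 0)"
      by (rule order_tendstoD(2)[OF F]) simp
    then show "eventually (\<lambda>r. k \<le> nat \<lceil>1 / F r\<rceil>) (at_right 0)"
      using pos
    proof eventually_elim
      case (elim r)
      then have "real k + 1 < 1 / F r" using support[of r] by (simp add: field_simps)
      then show ?case by linarith
    qed
  qed
  from filterlim_compose[OF risk this]
  have upper: "((\<lambda>r. exp 2 * risk (nat \<lceil>1 / F r\<rceil>)) \<longlongrightarrow> 0) (at_right 0)"
    by (rule tendsto_mult_right_zero)
  have "eventually (\<lambda>r. F r < 1 / 2) (at_right 0)"
    by (rule order_tendstoD(2)[OF F]) simp
  then have below: "eventually (\<lambda>r. ball_average r \<le> exp 2 * risk (nat \<lceil>1 / F r\<rceil>)) (at_right 0)"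
    using pos by eventually_elim (simp add: ball_average_le_risk)
  show ?thesis
    unfolding lebesgue_point_iff_ball_average
    by (rule tendsto_sandwich[OF _ below tendsto_const upper]) (simp add: ball_average_nonneg)
qed

lemma lebesgue_point_iff_risk_tendsto_0: "lebesgue_point P \<eta> x \<longleftrightarrow> risk \<longlonglongrightarrow> 0"
  using risk_tendsto_0_if_lebesgue_point lebesgue_point_if_risk_tendsto_0 by blast

end

locale iid_isimin = prob_space M for M :: "'w measure" +
  fixes X :: "nat \<Rightarrow> 'w \<Rightarrow> 'a::metric_space" and Z :: "nat \<Rightarrow> 'z measure"
    and \<Theta> :: "nat \<Rightarrow> 'w \<Rightarrow> 'z" and \<psi> :: "nat \<Rightarrow> (nat \<Rightarrow> real) \<Rightarrow> 'z \<Rightarrow> nat"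
  assumes indep_X: "indep_vars (\<lambda>_. borel) X UNIV"
    and identically_distributed: "\<And>i. distr M borel (X i) = distr M borel (X 0)"
    and isimin: "isimin M X Z \<Theta> \<psi>"
begin

abbreviation "P\<^sub>X \<equiv> distr M borel (X 0)"
abbreviation "P\<^sub>\<Theta> m \<equiv> distr M (Z m) (\<Theta> m)"
abbreviation "sample m \<omega> \<equiv> \<lambda>i\<in>{1..m}. X i \<omega>"

lemma measurable_X [measurable]: "X i \<in> M \<rightarrow>\<^sub>M borel"
  using indep_X unfolding indep_vars_def2 by simp

lemma
  assumes "1 \<le> m"
  shows measurable_\<Theta>: "\<Theta> m \<in> M \<rightarrow>\<^sub>M Z m"
    and indep_\<Theta>_sample: "indep_set
      (sigma_sets (space M) {\<Theta> m -` A \<inter> space M | A. A \<in> sets (Z m)})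
      (sigma_sets (space M) {sample m -` A \<inter> space M | A. A \<in> sets (PiM {1..m} (\<lambda>_. borel))})"
    and measurable_\<psi>: "(\<lambda>(r, z). \<psi> m r z)
      \<in> (PiM {1..m} (\<lambda>_. restrict_space borel {0::real..}) \<Otimes>\<^sub>M Z m) \<rightarrow>\<^sub>M count_space {1..m}"
    and \<psi>_argmin: "\<And>r z. r \<in> space (PiM {1..m} (\<lambda>_. restrict_space borel {0::real..})) \<Longrightarrow>
      z \<in> space (Z m) \<Longrightarrow> \<psi> m r z \<in> {1..m} \<and> (\<forall>k\<in>{1..m}. r (\<psi> m r z) \<le> r k)"
  using isimin assms unfolding isimin_def by blast+

lemma nn_selection:
  assumes m: "1 \<le> m"
  shows "nn_selection P\<^sub>X (P\<^sub>\<Theta> m) m (\<psi> m)"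
proof (rule nn_selection.intro)
  show "prob_space P\<^sub>X" by (rule prob_space_distr) simp
  show "prob_space (P\<^sub>\<Theta> m)" by (rule prob_space_distr[OF measurable_\<Theta>[OF m]])
  show "(\<lambda>(r, z). \<psi> m r z)
      \<in> (PiM {1..m} (\<lambda>_. restrict_space borel {0::real..}) \<Otimes>\<^sub>M P\<^sub>\<Theta> m) \<rightarrow>\<^sub>M count_space {1..m}"
    using measurable_\<psi>[OF m] by (simp cong: measurable_cong_sets sets_pair_measure_cong)
  show "\<psi> m r z \<in> {1..m} \<and> (\<forall>k\<in>{1..m}. r (\<psi> m r z) \<le> r k)"
    if "r \<in> space (PiM {1..m} (\<lambda>_. restrict_space borel {0::real..}))" "z \<in> space (P\<^sub>\<Theta> m)" for r z
    using \<psi>_argmin[OF m that(1)] that(2) by simp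
qed simp

lemma distr_sample_\<Theta>:
  assumes m: "1 \<le> m"
  shows "distr M (PiM {1..m} (\<lambda>_. P\<^sub>X) \<Otimes>\<^sub>M P\<^sub>\<Theta> m) (\<lambda>\<omega>. (sample m \<omega>, \<Theta> m \<omega>))
    = PiM {1..m} (\<lambda>_. P\<^sub>X) \<Otimes>\<^sub>M P\<^sub>\<Theta> m"
proof -
  have sample: "sample m \<in> M \<rightarrow>\<^sub>M PiM {1..m} (\<lambda>_. borel)" by measurable
  have "indep_vars (\<lambda>_. borel) X {1..m}" by (rule indep_vars_subset[OF indep_X]) auto
  then have "distr M (PiM {1..m} (\<lambda>_. borel)) (sample m) = PiM {1..m} (\<lambda>i. distr M borel (X i))"
    using indep_vars_iff_distr_eq_PiM'[where I="{1..m}" and M'="\<lambda>_. borel" and X=X] m by auto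
  also have "\<dots> = PiM {1..m} (\<lambda>_. P\<^sub>X)"
    by (intro PiM_cong refl identically_distributed)
  finally have "distr M (PiM {1..m} (\<lambda>_. borel) \<Otimes>\<^sub>M Z m) (\<lambda>\<omega>. (sample m \<omega>, \<Theta> m \<omega>))
      = PiM {1..m} (\<lambda>_. P\<^sub>X) \<Otimes>\<^sub>M P\<^sub>\<Theta> m"
    using distr_pair_eq_pair_measure_if_indep_set[OF sample measurable_\<Theta>[OF m]
        indep_set_commute[OF indep_\<Theta>_sample[OF m]]]
    by simp
  moreover have "sets (PiM {1..m} (\<lambda>_. P\<^sub>X) \<Otimes>\<^sub>M P\<^sub>\<Theta> m) = sets (PiM {1..m} (\<lambda>_. borel) \<Otimes>\<^sub>M Z m)"
    by (intro sets_pair_measure_cong sets_PiM_cong) auto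
  ultimately show ?thesis
    by (simp cong: distr_cong)
qed

definition nn_weight :: "'a \<Rightarrow> nat \<Rightarrow> real \<Rightarrow> real" where
  "nn_weight x m = nn_selection.weight P\<^sub>X (P\<^sub>\<Theta> m) x m (\<psi> m)"

lemma integral_nn_point:
  assumes m: "1 \<le> m" and [measurable]: "\<phi> \<in> borel_measurable borel"
    and \<phi>: "\<And>a. 0 \<le> \<phi> a \<and> \<phi> a \<le> B"
  shows "(\<integral>\<omega>. \<phi> (nn_point X \<Theta> \<psi> x m \<omega>) \<partial>M) = (\<integral>a. \<phi> a * nn_weight x m (dist x a) \<partial>P\<^sub>X)"
proof -
  interpret nn_selection P\<^sub>X "P\<^sub>\<Theta> m" x m "\<psi> m" by (rule nn_selection[OF m])
  let ?Q = "sample_space {1..m} \<Otimes>\<^sub>M P\<^sub>\<Theta> m"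
  have sample_\<Theta>: "(\<lambda>\<omega>. (sample m \<omega>, \<Theta> m \<omega>)) \<in> M \<rightarrow>\<^sub>M ?Q"
    using measurable_\<Theta>[OF m] by (subst measurable_cong_sets[OF refl sets_pair_measure_cong[OF sets_PiM_cong sets_distr]]) auto
  have "nn_point X \<Theta> \<psi> x m \<omega> = selected (sample m \<omega>) (\<Theta> m \<omega>)" if "\<omega> \<in> space M" for \<omega>
  proof -
    have "\<Theta> m \<omega> \<in> space (P\<^sub>\<Theta> m)" using measurable_space[OF measurable_\<Theta>[OF m] that] by simp
    moreover have dists: "dists (sample m \<omega>) = (\<lambda>i\<in>{1..m}. dist x (X i \<omega>))"
      by (auto simp: dists_def fun_eq_iff)
    ultimately have "\<psi> m (\<lambda>i\<in>{1..m}. dist x (X i \<omega>)) (\<Theta> m \<omega>) \<in> {1..m}"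
      using selected_index(1) by metis
    then show ?thesis unfolding nn_point_def dists by simp
  qed
  then have "(\<integral>\<omega>. \<phi> (nn_point X \<Theta> \<psi> x m \<omega>) \<partial>M) = (\<integral>\<omega>. \<phi> (selected (sample m \<omega>) (\<Theta> m \<omega>)) \<partial>M)"
    by (intro Bochner_Integration.integral_cong) auto
  also have "\<dots> = (\<integral>w. \<phi> (selected (fst w) (snd w)) \<partial>distr M ?Q (\<lambda>\<omega>. (sample m \<omega>, \<Theta> m \<omega>)))"
    using measurable_compose[OF measurable_selected, of \<phi> borel]
    by (subst integral_distr[OF sample_\<Theta>]) simp_all
  also have "\<dots> = (\<integral>a. \<phi> a * weight (dist x a) \<partial>P\<^sub>X)"
    unfolding distr_sample_\<Theta>[OF m] using integral_selected[of \<phi> B] \<phi> by simp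
  finally show ?thesis by (simp add: nn_weight_def)
qed

lemma radial_weights_nn_weight:
  assumes "in_support P\<^sub>X x" "\<eta> \<in> borel_measurable borel" "\<And>a. \<bar>\<eta> a - \<eta> x\<bar> \<le> C"
  shows "radial_weights P\<^sub>X \<eta> x C (nn_weight x)"
proof (rule radial_weights.intro)
  show "prob_space P\<^sub>X" by (rule prob_space_distr) simp
  show "0 < measure P\<^sub>X (cball x r)" if "0 < r" for r
    using assms(1) that unfolding in_support_def by auto
  note nn = nn_selection.integral_weight nn_selection.integral_tail_weight_le
    nn_selection.weight_antimono nn_selection.weight_nonneg nn_selection.weight_le
    nn_selection.weight_lower nn_selection.measurable_weight
  show "(\<integral>a. nn_weight x m (dist x a) \<partial>P\<^sub>X) = 1" if "1 \<le> m" for m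
    unfolding nn_weight_def by (rule nn(1)[OF nn_selection[OF that]])
  show "(\<integral>a. indicator {a. r < dist x a} a * nn_weight x m (dist x a) \<partial>P\<^sub>X)
      \<le> measure P\<^sub>X {a. r < dist x a} ^ m" if "1 \<le> m" for m r
    unfolding nn_weight_def by (rule nn(2)[OF nn_selection[OF that]])
  show "nn_weight x m t \<le> nn_weight x m t'" if "1 \<le> m" "0 \<le> t'" "t' \<le> t" for m t t'
    unfolding nn_weight_def using that(2,3) by (rule nn(3)[OF nn_selection[OF that(1)]])
  show "0 \<le> nn_weight x m t \<and> nn_weight x m t \<le> m" if "1 \<le> m" for m t
    unfolding nn_weight_def using nn(4,5)[OF nn_selection[OF that]] by blast
  show "m * measure P\<^sub>X {a. t < dist x a} ^ (m - 1) \<le> nn_weight x m t" if "1 \<le> m" "0 \<le> t" for m t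
    unfolding nn_weight_def using that(2) by (rule nn(6)[OF nn_selection[OF that(1)]])
  show "(\<lambda>a. nn_weight x m (dist x a)) \<in> borel_measurable P\<^sub>X" if "1 \<le> m" for m
    unfolding nn_weight_def by (rule nn(7)[OF nn_selection[OF that]])
qed (simp_all add: assms(2,3))

end

theorem mainTheorem12:
  fixes M :: "'w measure" and X :: "nat \<Rightarrow> 'w \<Rightarrow> 'a::metric_space"
    and \<eta> :: "'a \<Rightarrow> real" and x :: 'a
    and Z :: "nat \<Rightarrow> 'z measure" and \<Theta> :: "nat \<Rightarrow> 'w \<Rightarrow> 'z"
    and \<psi> :: "nat \<Rightarrow> (nat \<Rightarrow> real) \<Rightarrow> 'z \<Rightarrow> nat"
  assumes "prob_space M"
    and "prob_space.indep_vars M (\<lambda>_. borel) X UNIV"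
    and "\<And>i. distr M borel (X i) = distr M borel (X 0)"
    and "in_support (distr M borel (X 0)) x"
    and "\<eta> \<in> borel_measurable borel" and "bounded (range \<eta>)"
    and "isimin M X Z \<Theta> \<psi>"
  shows "lebesgue_point (distr M borel (X 0)) \<eta> x \<longleftrightarrow>
         (\<lambda>m. \<integral>\<omega>. \<bar>\<eta> (nn_point X \<Theta> \<psi> x m \<omega>) - \<eta> x\<bar> \<partial>M) \<longlonglongrightarrow> 0"
proof -
  interpret iid_isimin M X Z \<Theta> \<psi>
    using assms(1-3,7) by (simp add: iid_isimin_def iid_isimin_axioms_def)
  obtain B where B: "\<And>a. \<bar>\<eta> a\<bar> \<le> B" using assms(6) unfolding bounded_iff by auto
  have deviation: "\<bar>\<eta> a - \<eta> x\<bar> \<le> 2 * B" for a using B[of a] B[of x] by linarith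
  interpret radial_weights P\<^sub>X \<eta> x "2 * B" "nn_weight x"
    by (rule radial_weights_nn_weight[OF assms(4,5) deviation])
  have "(\<lambda>a. \<bar>\<eta> a - \<eta> x\<bar>) \<in> borel_measurable borel" using assms(5) by measurable
  with integral_nn_point[of _ "\<lambda>a. \<bar>\<eta> a - \<eta> x\<bar>" "2 * B"] deviation
  have "risk m = (\<integral>\<omega>. \<bar>\<eta> (nn_point X \<Theta> \<psi> x m \<omega>) - \<eta> x\<bar> \<partial>M)" if "1 \<le> m" for m
    using that by (simp add: risk_def)
  then have "eventually (\<lambda>m. risk m = (\<integral>\<omega>. \<bar>\<eta> (nn_point X \<Theta> \<psi> x m \<omega>) - \<eta> x\<bar> \<partial>M)) sequentially"
    unfolding eventually_sequentially by blast
  from tendsto_cong[OF this] show ?thesis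
    by (simp add: lebesgue_point_iff_risk_tendsto_0)
qed

end
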